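(* Let $G=([n],E)$ be a finite simple loopless undirected graph and let $S_G=\mathrm{span}\{\ket{i}\!\bra{j}:\ i=j\in[n]\ \text{or}\ \{i,j\}\in E\}\subseteq M_n$. Then $\mathcal{H}(S_G)=\mathcal{H}(G)$.
   Context: All scalars are complex; $M_{n\times m}$ denotes complex $n\times m$ matrices, $M_n=M_{n\times n}$, and $\ket{i}$ is the $i$-th standard basis vector. For a linear subspace $S\subseteq M_n$, $M_m(S)$ denotes the set of $m\times m$ block matrices $B=[B_{i,j}]_{i,j\in[m]}$ with every block $B_{i,j}\in S$, viewed as elements of $M_{mn}$. A noncommutative graph is a linear subspace $S\subseteq M_n$ that contains $I_n$ and is closed under conjugate transpose. The Haemers bound of a noncommutative graph $S\subseteq M_n$ is $\mathcal{H}(S)=\min\{\mathrm{rk}(B):\ m\in\mathbb{N},\ B\in M_m(S),\ \sum_{i=1}^m B_{i,i}=I_n\}$. The Haemers bound of a graph $G=([n],E)$ (over $\mathbb{C}$) is $\mathcal{H}(G)=\min\{\mathrm{rk}(B):\ B\in M_n,\ B_{i,i}=1\ \forall i\in[n],\ B_{i,j}=0\ \text{whenever } i\neq j \text{ and } \{i,j\}\notin E\}$. *)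

theory Defs
  imports "Jordan_Normal_Form.DL_Rank"
begin

definition crank :: "complex mat \<Rightarrow> nat" where
  "crank B = vec_space.rank (dim_row B) B"

text \<open>Finite simple loopless undirected graph on vertex set [n] = {0..<n},
  given by an edge relation E (only pairs in [n] are relevant).\<close>
definition simple_graph :: "nat \<Rightarrow> (nat \<Rightarrow> nat \<Rightarrow> bool) \<Rightarrow> bool" where
  "simple_graph n E \<longleftrightarrow> (\<forall>i<n. \<forall>j<n. E i j \<longleftrightarrow> E j i) \<and> (\<forall>i<n. \<not> E i i)"

text \<open>S_G = span{ |i><j| : i = j or {i,j} in E }: exactly the n x n matrices
  supported on the diagonal and the edge positions.\<close>
definition graph_space :: "nat \<Rightarrow> (nat \<Rightarrow> nat \<Rightarrow> bool) \<Rightarrow> complex mat set" where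
  "graph_space n E = {A \<in> carrier_mat n n.
      \<forall>i<n. \<forall>j<n. \<not> (i = j \<or> E i j) \<longrightarrow> A $$ (i, j) = 0}"

definition block :: "nat \<Rightarrow> complex mat \<Rightarrow> nat \<Rightarrow> nat \<Rightarrow> complex mat" where
  "block n B i j = mat n n (\<lambda>(a, b). B $$ (i * n + a, j * n + b))"

definition haemers_nc :: "nat \<Rightarrow> complex mat set \<Rightarrow> nat" where
  "haemers_nc n S = (LEAST r. \<exists>m B. B \<in> carrier_mat (m * n) (m * n)
      \<and> (\<forall>i<m. \<forall>j<m. block n B i j \<in> S)
      \<and> mat n n (\<lambda>(a, b). \<Sum>i<m. block n B i i $$ (a, b)) = 1\<^sub>m n
      \<and> crank B = r)"

definition haemers_graph :: "nat \<Rightarrow> (nat \<Rightarrow> nat \<Rightarrow> bool) \<Rightarrow> nat" where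
  "haemers_graph n E = (LEAST r. \<exists>B. B \<in> carrier_mat n n
      \<and> (\<forall>i<n. B $$ (i, i) = 1)
      \<and> (\<forall>i<n. \<forall>j<n. i \<noteq> j \<and> \<not> E i j \<longrightarrow> B $$ (i, j) = 0)
      \<and> crank B = r)"

end

theory Submission
  imports Defs "HOL-Computational_Algebra.Polynomial"
begin

(* A matrix B fitting G lifts to the block matrix P B P^T whose (i, j) block is B_ij |i><j|: its
   blocks lie in S_G, its diagonal blocks sum to I, and its rank is at most rk B.  Conversely, a
   block matrix B in M_m(S_G) whose diagonal blocks sum to I is compressed to
   C = (x^T \<otimes> I) B (y \<otimes> I), which vanishes off the edges of G and has rank at most rk B.
   With weights x_i = t^(i m) and y_j = t^j, the a-th diagonal entry of C is a polynomial in t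
   whose coefficients are the entries B_(i,a),(j,a); those with i = j sum to 1, so the polynomial
   is nonzero, some t is a common non-root for all a, and rescaling the columns makes the
   diagonal 1. *)

lemma (in vec_space) rank_le_of_cols_subset_span:
  assumes A: "A \<in> carrier_mat n nc" and W: "W \<in> carrier_mat n k"
    and sub: "set (cols A) \<subseteq> span (set (cols W))"
  shows "rank A \<le> rank W"
proof -
  let ?S = "span (set (cols W))"
  have Wc: "set (cols W) \<subseteq> carrier_vec n" using W cols_dim by blast
  have vs: "vectorspace class_ring (vs ?S)"
    using span_is_subspace[THEN subspace_is_vs, OF Wc] by auto
  have sm: "submodule class_ring ?S V" using span_is_submodule[OF Wc] by simp
  have subsp: "subspace class_ring (span (set (cols A))) (vs ?S)"
    using vectorspace.span_is_subspace[OF vs, of "set (cols A)", unfolded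
      span_li_not_depend(1)[OF sub sm]] sub by auto
  have fin: "vectorspace.fin_dim class_ring (vs ?S)"
       "vectorspace.fin_dim class_ring (vs ?S\<lparr>carrier := span (set (cols A))\<rparr>)"
    using fin_dim_span_cols A W by auto
  show ?thesis unfolding rank_def
    using vectorspace.subspace_dim[OF vs subsp fin] by simp
qed

lemma (in vec_space) mult_mat_vec_in_span_cols:
  assumes W: "W \<in> carrier_mat n k" and v: "v \<in> carrier_vec k"
  shows "W *\<^sub>v v \<in> span (set (cols W))"
proof -
  have Wc: "set (cols W) \<subseteq> carrier_vec n" using W cols_dim by blast
  have "lincomb_list (\<lambda>i. v $ i) (cols W) = mat_of_cols n (cols W) *\<^sub>v vec (length (cols W)) (\<lambda>i. v $ i)"
    by (rule lincomb_list_as_mat_mult) (use Wc in auto)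
  also have "\<dots> = W *\<^sub>v v"
  proof -
    have "mat_of_cols n (cols W) = W" using W mat_of_cols_cols[of W] by auto
    moreover have "vec (length (cols W)) (\<lambda>i. v $ i) = v" using W v by (auto intro!: eq_vecI)
    ultimately show ?thesis by simp
  qed
  finally have "W *\<^sub>v v \<in> span_list (cols W)"
    unfolding span_list_def by (auto intro!: exI[of _ "\<lambda>i. v $ i"])
  then show ?thesis using span_list_as_span[OF Wc] by simp
qed

lemma (in vec_space) rank_mult_le_left:
  assumes W: "W \<in> carrier_mat n k" and G: "G \<in> carrier_mat k nc"
  shows "rank (W * G) \<le> rank W"
proof (rule rank_le_of_cols_subset_span[OF _ W])
  show "W * G \<in> carrier_mat n nc" using W G by auto
  show "set (cols (W * G)) \<subseteq> span (set (cols W))"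
  proof
    fix x assume "x \<in> set (cols (W * G))"
    then obtain j where j: "j < nc" "x = col (W * G) j" using W G
      by (metis cols_length cols_nth in_set_conv_nth carrier_matD index_mult_mat(3))
    then have "x = W *\<^sub>v col G j" using col_mult2[OF W G] by simp
    then show "x \<in> span (set (cols W))" using mult_mat_vec_in_span_cols[OF W] G j by auto
  qed
qed

lemma (in vec_space) subset_span_maximal_lin_indpt:
  assumes S: "S \<subseteq> carrier_vec n" and max: "maximal U (\<lambda>T. T \<subseteq> S \<and> lin_indpt T)"
  shows "S \<subseteq> span U"
proof
  fix c assume c: "c \<in> S"
  have U: "U \<subseteq> S" "lin_indpt U" using max unfolding maximal_def by simp_all
  have Uc: "U \<subseteq> carrier_vec n" and cc: "c \<in> carrier_vec n" using U(1) c S by auto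
  show "c \<in> span U"
  proof (cases "c \<in> U")
    case True
    then show ?thesis using in_own_span[OF Uc] by auto
  next
    case False
    have "U \<union> {c} \<noteq> U" using False by auto
    moreover have "U \<union> {c} \<subseteq> S" using U(1) c by auto
    ultimately have "\<not> lin_indpt (U \<union> {c})"
      using max unfolding maximal_def by auto
    then show ?thesis using lin_dep_iff_in_span[OF Uc U(2) cc False] by simp
  qed
qed

lemma (in vec_space) rank_factorization:
  assumes Y: "Y \<in> carrier_mat n nc"
  obtains F G where "F \<in> carrier_mat n (rank Y)" "G \<in> carrier_mat (rank Y) nc" "Y = F * G"
proof -
  obtain U where max: "maximal U (\<lambda>T. T \<subseteq> set (cols Y) \<and> lin_indpt T)"
    using maximal_exists[of "\<lambda>T. T \<subseteq> set (cols Y) \<and> lin_indpt T" "card (set (cols Y))" "{}"]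
    by (meson List.finite_set card_mono empty_iff empty_subsetI finite_lin_indpt2 rev_finite_subset)
  have Yc: "set (cols Y) \<subseteq> carrier_vec n" using Y cols_dim by blast
  have U: "U \<subseteq> set (cols Y)" using max unfolding maximal_def by simp
  obtain us where us: "set us = U" "distinct us"
    using finite_distinct_list[OF finite_subset[OF U List.finite_set]] by blast
  have len: "length us = rank Y"
    using rank_card_indpt[OF Y max] distinct_card[OF us(2)] us(1) by simp
  have usc: "set us \<subseteq> carrier_vec n" using us U Yc by auto
  define F where "F = mat_of_cols n us"
  have "\<exists>g. col Y j = F *\<^sub>v vec (rank Y) g" if j: "j < nc" for j
  proof -
    have "col Y j \<in> set (cols Y)" using Y j by (simp add: cols_def)
    then have "col Y j \<in> span_list us"
      using subset_span_maximal_lin_indpt[OF Yc max] span_list_as_span[OF usc] us by auto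
    then obtain g where "col Y j = lincomb_list g us" unfolding span_list_def by auto
    also have "\<dots> = F *\<^sub>v vec (rank Y) g"
      unfolding F_def len[symmetric] by (rule lincomb_list_as_mat_mult) (use usc in auto)
    finally show ?thesis by blast
  qed
  then obtain g where g: "\<And>j. j < nc \<Longrightarrow> col Y j = F *\<^sub>v vec (rank Y) (g j)" by metis
  define G where "G = mat (rank Y) nc (\<lambda>(i, j). g j i)"
  have F: "F \<in> carrier_mat n (rank Y)" unfolding F_def len[symmetric] by auto
  have G: "G \<in> carrier_mat (rank Y) nc" unfolding G_def by auto
  have YFG: "Y = F * G"
  proof (rule eq_matI)
    fix i j assume "i < dim_row (F * G)" "j < dim_col (F * G)"
    then have i: "i < n" and j: "j < nc" using F G by auto
    have colG: "col G j = vec (rank Y) (g j)" unfolding G_def using j by (auto intro!: eq_vecI)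
    have "Y $$ (i, j) = col Y j $ i" using Y i j by simp
    also have "\<dots> = (F *\<^sub>v col G j) $ i" using g[OF j] colG by simp
    also have "\<dots> = (F * G) $$ (i, j)" using F G i j by simp
    finally show "Y $$ (i, j) = (F * G) $$ (i, j)" .
  qed (use Y F G in auto)
  show ?thesis by (rule that[OF F G YFG])
qed

lemma crank_mult3_le:
  assumes X: "X \<in> carrier_mat p q" and Y: "Y \<in> carrier_mat q r" and Z: "Z \<in> carrier_mat r s"
  shows "crank (X * Y * Z) \<le> crank Y"
proof -
  have rk: "crank Y = vec_space.rank q Y" using Y unfolding crank_def by simp
  obtain F G where F: "F \<in> carrier_mat q (crank Y)" and G: "G \<in> carrier_mat (crank Y) r"
    and YFG: "Y = F * G"
    by (rule vec_space.rank_factorization[OF Y, folded rk])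
  have "X * Y * Z = (X * F) * (G * Z)"
    unfolding YFG using assoc_mult_mat[OF X F G] assoc_mult_mat[OF _ G Z, of "X * F" p] X F
    by simp
  then have "crank (X * Y * Z) = vec_space.rank p ((X * F) * (G * Z))"
    unfolding crank_def using X by simp
  also have "\<dots> \<le> vec_space.rank p (X * F)"
    using vec_space.rank_mult_le_left[of "X * F" p "crank Y" "G * Z" s] X F G Z by simp
  also have "\<dots> \<le> crank Y"
    using vec_space.rank_le_nc[of "X * F" p "crank Y"] X F by simp
  finally show ?thesis .
qed

lemma index_mult_mat3:
  fixes X :: "'a::comm_semiring_0 mat"
  assumes X: "X \<in> carrier_mat p q" and Y: "Y \<in> carrier_mat q r" and Z: "Z \<in> carrier_mat r s"
    and i: "i < p" and j: "j < s"
  shows "(X * Y * Z) $$ (i, j) = (\<Sum>k<q. \<Sum>l<r. X $$ (i, k) * Y $$ (k, l) * Z $$ (l, j))"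
proof -
  have "(X * Y * Z) $$ (i, j) = (\<Sum>k<q. X $$ (i, k) * (\<Sum>l<r. Y $$ (k, l) * Z $$ (l, j)))"
    using X Y Z i j by (simp add: scalar_prod_def lessThan_atLeast0)
  then show ?thesis by (simp add: sum_distrib_left mult.assoc)
qed

lemma sum_lessThan_mult_nat: "(\<Sum>r<m * n. g r) = (\<Sum>i<m. \<Sum>a<n. g (i * n + a))" for m n :: nat
proof (induction m)
  case (Suc m)
  have "(\<Sum>r<Suc m * n. g r) = (\<Sum>r<m * n. g r) + (\<Sum>r\<in>{m * n..<m * n + n}. g r)"
    by (simp add: lessThan_atLeast0 sum.atLeastLessThan_concat add.commute)
  also have "(\<Sum>r\<in>{m * n..<m * n + n}. g r) = (\<Sum>a<n. g (m * n + a))"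
    by (simp add: lessThan_atLeast0 sum.shift_bounds_nat_ivl[symmetric] add.commute)
  finally show ?case using Suc by simp
qed simp

lemma block_index_less: "i < m \<Longrightarrow> a < n \<Longrightarrow> i * n + a < m * (n::nat)"
proof -
  assume "i < m" "a < n"
  then have "i * n + a < (i + 1) * n" and "(i + 1) * n \<le> m * n"
    by (simp, intro mult_le_mono1, simp)
  then show ?thesis by linarith
qed

lemma block_index_eq_iff:
  fixes i j a b n :: nat
  assumes "a < n" "b < n"
  shows "i * n + a = j * n + b \<longleftrightarrow> i = j \<and> a = b"
proof
  assume eq: "i * n + a = j * n + b"
  have "(i * n + a) div n = i" "(j * n + b) div n = j" "(i * n + a) mod n = a" "(j * n + b) mod n = b"
    using assms by auto
  with eq show "i = j \<and> a = b" by metis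
qed simp

definition fits_graph :: "nat \<Rightarrow> (nat \<Rightarrow> nat \<Rightarrow> bool) \<Rightarrow> complex mat \<Rightarrow> bool" where
  "fits_graph n E B \<longleftrightarrow> B \<in> carrier_mat n n \<and> (\<forall>i<n. B $$ (i, i) = 1)
     \<and> (\<forall>i<n. \<forall>j<n. i \<noteq> j \<and> \<not> E i j \<longrightarrow> B $$ (i, j) = 0)"

definition fits_space :: "nat \<Rightarrow> complex mat set \<Rightarrow> nat \<Rightarrow> complex mat \<Rightarrow> bool" where
  "fits_space n S m B \<longleftrightarrow> B \<in> carrier_mat (m * n) (m * n)
     \<and> (\<forall>i<m. \<forall>j<m. block n B i j \<in> S)
     \<and> mat n n (\<lambda>(a, b). \<Sum>i<m. block n B i i $$ (a, b)) = 1\<^sub>m n"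

lemma haemers_graph_eq: "haemers_graph n E = (LEAST r. \<exists>B. fits_graph n E B \<and> crank B = r)"
  by (simp add: haemers_graph_def fits_graph_def conj_assoc)

lemma haemers_graph_le: "fits_graph n E B \<Longrightarrow> haemers_graph n E \<le> crank B"
  unfolding haemers_graph_eq by (rule Least_le) blast

lemma haemers_graph_attained: "\<exists>B. fits_graph n E B \<and> crank B = haemers_graph n E"
proof -
  have "fits_graph n E (1\<^sub>m n)" unfolding fits_graph_def by simp
  then show ?thesis
    unfolding haemers_graph_eq using LeastI_ex[of "\<lambda>r. \<exists>B. fits_graph n E B \<and> crank B = r"]
    by blast
qed

lemma haemers_nc_eq: "haemers_nc n S = (LEAST r. \<exists>m B. fits_space n S m B \<and> crank B = r)"
  by (simp add: haemers_nc_def fits_space_def conj_assoc)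

lemma haemers_nc_le: "fits_space n S m B \<Longrightarrow> haemers_nc n S \<le> crank B"
  unfolding haemers_nc_eq by (rule Least_le) blast

lemma haemers_nc_attained:
  "fits_space n S m B \<Longrightarrow> \<exists>m' B'. fits_space n S m' B' \<and> crank B' = haemers_nc n S"
  unfolding haemers_nc_eq using LeastI_ex[of "\<lambda>r. \<exists>m B. fits_space n S m B \<and> crank B = r"]
  by blast

(* The isometry e_k \<mapsto> e_k \<otimes> e_k; row index k * n + k is the pair (k, k) in the block layout of block. *)
definition diag_lift :: "nat \<Rightarrow> 'a::zero_neq_one mat" where
  "diag_lift n = mat (n * n) n (\<lambda>(r, k). if r = k * n + k then 1 else 0)"

lemma index_diag_lift_conj:
  fixes B :: "'a::comm_ring_1 mat"
  assumes B: "B \<in> carrier_mat n n" and i: "i < n" and a: "a < n" and j: "j < n" and b: "b < n"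
  shows "(diag_lift n * B * transpose_mat (diag_lift n)) $$ (i * n + a, j * n + b)
    = (if a = i \<and> b = j then B $$ (i, j) else 0)"
proof -
  let ?P = "diag_lift n :: 'a mat"
  let ?w = "if a = i \<and> b = j then B $$ (i, j) else 0"
  have P: "?P \<in> carrier_mat (n * n) n" unfolding diag_lift_def by simp
  then have PT: "transpose_mat (?P) \<in> carrier_mat n (n * n)" by simp
  have ia: "i * n + a < n * n" and jb: "j * n + b < n * n"
    using block_index_less i a j b by auto
  have lift: "?P $$ (r * n + c, k) = (if k = r \<and> c = r then 1 else 0)"
    if "r < n" "c < n" "k < n" for r c k
    using that block_index_less[of r n c n] block_index_eq_iff[of c n k r k]
    unfolding diag_lift_def by auto
  have liftT: "transpose_mat (?P) $$ (k, r * n + c) = ?P $$ (r * n + c, k)"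
    if "r < n" "c < n" "k < n" for r c k
    using carrier_matD[OF P] that block_index_less[of r n c n] by simp
  have "(?P * B * transpose_mat (?P)) $$ (i * n + a, j * n + b)
      = (\<Sum>k<n. \<Sum>l<n. ?P $$ (i * n + a, k) * B $$ (k, l) * transpose_mat (?P) $$ (l, j * n + b))"
    by (rule index_mult_mat3[OF P B PT ia jb])
  also have "\<dots> = (\<Sum>k<n. \<Sum>l<n. if l = j then if k = i then ?w else 0 else 0)"
    using lift liftT i a j b by (intro sum.cong refl) auto
  also have "\<dots> = ?w"
    using i j by (simp add: sum.delta)
  finally show ?thesis .
qed

lemma fits_space_of_fits_graph:
  assumes "fits_graph n E B"
  obtains B' where "fits_space n (graph_space n E) n B'" and "crank B' \<le> crank B"
proof -
  let ?P = "diag_lift n :: complex mat"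
  let ?B' = "?P * B * transpose_mat ?P"
  have B: "B \<in> carrier_mat n n" and diag: "\<forall>i<n. B $$ (i, i) = 1"
    and zero: "\<forall>i<n. \<forall>j<n. i \<noteq> j \<and> \<not> E i j \<longrightarrow> B $$ (i, j) = 0"
    using assms unfolding fits_graph_def by auto
  have P: "?P \<in> carrier_mat (n * n) n" unfolding diag_lift_def by simp
  have blk: "block n ?B' i j $$ (a, b) = (if a = i \<and> b = j then B $$ (i, j) else 0)"
    if "i < n" "j < n" "a < n" "b < n" for i j a b
    using index_diag_lift_conj[OF B] that unfolding block_def by simp
  have "block n ?B' i j \<in> graph_space n E" if "i < n" "j < n" for i j
    using blk that zero unfolding graph_space_def by (auto simp: block_def)
  moreover have "mat n n (\<lambda>(a, b). \<Sum>i<n. block n ?B' i i $$ (a, b)) = 1\<^sub>m n"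
    using blk diag by (intro eq_matI) (auto simp: sum.delta)
  ultimately have "fits_space n (graph_space n E) n ?B'"
    unfolding fits_space_def using P B by simp
  moreover have "crank ?B' \<le> crank B"
    using P B by (intro crank_mult3_le) auto
  ultimately show ?thesis by (rule that)
qed

(* In Kronecker notation, weighted_block_row n m x = x^T \<otimes> I_n, and weighted_block_col n m y stacks
   the diagonal blocks diag (y j 0, ..., y j (n - 1)) for j < m. *)
definition weighted_block_row :: "nat \<Rightarrow> nat \<Rightarrow> (nat \<Rightarrow> 'a::zero) \<Rightarrow> 'a mat" where
  "weighted_block_row n m x = mat n (m * n) (\<lambda>(a, r). if r mod n = a then x (r div n) else 0)"

definition weighted_block_col :: "nat \<Rightarrow> nat \<Rightarrow> (nat \<Rightarrow> nat \<Rightarrow> 'a::zero) \<Rightarrow> 'a mat" where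
  "weighted_block_col n m y = mat (m * n) n (\<lambda>(r, b). if r mod n = b then y (r div n) b else 0)"

lemma index_weighted_compression:
  fixes B :: "'a::comm_ring_1 mat"
  assumes B: "B \<in> carrier_mat (m * n) (m * n)" and a: "a < n" and b: "b < n"
  shows "(weighted_block_row n m x * B * weighted_block_col n m y) $$ (a, b)
    = (\<Sum>i<m. \<Sum>j<m. x i * B $$ (i * n + a, j * n + b) * y j b)"
proof -
  let ?X = "weighted_block_row n m x" and ?Y = "weighted_block_col n m y"
  have X: "?X \<in> carrier_mat n (m * n)" and Y: "?Y \<in> carrier_mat (m * n) n"
    unfolding weighted_block_row_def weighted_block_col_def by simp_all
  have Xe: "?X $$ (a, i * n + c) = (if c = a then x i else 0)" if "i < m" "c < n" for i c
    using that a block_index_less[of i m c n] unfolding weighted_block_row_def by simp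
  have Ye: "?Y $$ (j * n + c, b) = (if c = b then y j b else 0)" if "j < m" "c < n" for j c
    using that b block_index_less[of j m c n] unfolding weighted_block_col_def by simp
  have "(?X * B * ?Y) $$ (a, b) = (\<Sum>r<m * n. \<Sum>s<m * n. ?X $$ (a, r) * B $$ (r, s) * ?Y $$ (s, b))"
    by (rule index_mult_mat3[OF X B Y a b])
  also have "\<dots> = (\<Sum>i<m. \<Sum>j<m. \<Sum>c<n. \<Sum>d<n.
      ?X $$ (a, i * n + c) * B $$ (i * n + c, j * n + d) * ?Y $$ (j * n + d, b))"
    by (simp only: sum_lessThan_mult_nat) (rule sum.cong[OF refl], rule sum.swap)
  also have "\<dots> = (\<Sum>i<m. \<Sum>j<m. \<Sum>c<n. \<Sum>d<n.
      if d = b then if c = a then x i * B $$ (i * n + a, j * n + b) * y j b else 0 else 0)"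
    using Xe Ye by (intro sum.cong refl) auto
  also have "\<dots> = (\<Sum>i<m. \<Sum>j<m. x i * B $$ (i * n + a, j * n + b) * y j b)"
    using a b by (simp add: sum.delta)
  finally show ?thesis .
qed

lemma coeff_sum_monom_pairs:
  fixes M :: "nat \<Rightarrow> nat \<Rightarrow> 'a::comm_ring_1"
  assumes i: "i < m" and j: "j < m"
  shows "coeff (\<Sum>k<m. \<Sum>l<m. monom (M k l) (k * m + l)) (i * m + j) = M i j"
proof -
  have "coeff (\<Sum>k<m. \<Sum>l<m. monom (M k l) (k * m + l)) (i * m + j)
      = (\<Sum>k<m. \<Sum>l<m. if k * m + l = i * m + j then M k l else 0)"
    by (simp add: coeff_sum coeff_monom)
  also have "\<dots> = (\<Sum>k<m. \<Sum>l<m. if l = j then if k = i then M k l else 0 else 0)"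
    using block_index_eq_iff[OF _ j] by (intro sum.cong refl) auto
  also have "\<dots> = M i j"
    using i j by (simp add: sum.delta)
  finally show ?thesis .
qed

lemma poly_common_non_root:
  fixes p :: "nat \<Rightarrow> 'a::{idom, ring_char_0} poly"
  assumes "\<forall>a<n. p a \<noteq> 0"
  shows "\<exists>t. \<forall>a<n. poly (p a) t \<noteq> 0"
proof -
  have "(\<Prod>a<n. p a) \<noteq> 0" using assms by simp
  then have "finite {t. poly (\<Prod>a<n. p a) t = 0}" by (rule poly_roots_finite)
  then obtain t where "poly (\<Prod>a<n. p a) t \<noteq> 0"
    using ex_new_if_finite[OF infinite_UNIV_char_0] by blast
  then show ?thesis by (auto simp: poly_prod)
qed

lemma ex_power_weights_nonzero:
  fixes M :: "nat \<Rightarrow> nat \<Rightarrow> nat \<Rightarrow> 'a::{idom, ring_char_0}"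
  assumes "\<forall>a<n. \<exists>i<m. M a i i \<noteq> 0"
  shows "\<exists>t. \<forall>a<n. (\<Sum>i<m. \<Sum>j<m. t ^ (i * m) * M a i j * t ^ j) \<noteq> 0"
proof -
  define p where "p a = (\<Sum>i<m. \<Sum>j<m. monom (M a i j) (i * m + j))" for a
  have "p a \<noteq> 0" if "a < n" for a
  proof -
    obtain i where "i < m" "M a i i \<noteq> 0" using assms \<open>a < n\<close> by blast
    then have "coeff (p a) (i * m + i) \<noteq> 0"
      unfolding p_def by (simp add: coeff_sum_monom_pairs)
    then show ?thesis by auto
  qed
  then obtain t where "\<forall>a<n. poly (p a) t \<noteq> 0"
    using poly_common_non_root[of n p] by blast
  moreover have "poly (p a) t = (\<Sum>i<m. \<Sum>j<m. t ^ (i * m) * M a i j * t ^ j)" for a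
    unfolding p_def by (simp add: poly_sum poly_monom power_add mult_ac)
  ultimately show ?thesis by auto
qed

lemma fits_graph_of_fits_space:
  assumes "fits_space n (graph_space n E) m B"
  obtains C where "fits_graph n E C" and "crank C \<le> crank B"
proof -
  have B: "B \<in> carrier_mat (m * n) (m * n)"
    and blocks: "\<forall>i<m. \<forall>j<m. block n B i j \<in> graph_space n E"
    and trace: "mat n n (\<lambda>(a, b). \<Sum>i<m. block n B i i $$ (a, b)) = 1\<^sub>m n"
    using assms unfolding fits_space_def by auto
  have zero: "B $$ (i * n + a, j * n + b) = 0"
    if "i < m" "j < m" "a < n" "b < n" "a \<noteq> b" "\<not> E a b" for i j a b
  proof -
    have "block n B i j $$ (a, b) = 0" using blocks that unfolding graph_space_def by auto
    then show ?thesis using that unfolding block_def by simp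
  qed
  have "\<exists>i<m. B $$ (i * n + a, i * n + a) \<noteq> 0" if "a < n" for a
  proof (rule ccontr)
    assume "\<not> ?thesis"
    then have "(\<Sum>i<m. block n B i i $$ (a, a)) = 0" using that unfolding block_def by simp
    then show False using arg_cong[OF trace, of "\<lambda>M. M $$ (a, a)"] that by simp
  qed
  then obtain t where t: "\<forall>b<n. (\<Sum>i<m. \<Sum>j<m. t ^ (i * m) * B $$ (i * n + b, j * n + b) * t ^ j) \<noteq> 0"
    using ex_power_weights_nonzero[of n m "\<lambda>a i j. B $$ (i * n + a, j * n + a)"] by blast
  define d where "d b = (\<Sum>i<m. \<Sum>j<m. t ^ (i * m) * B $$ (i * n + b, j * n + b) * t ^ j)" for b
  let ?X = "weighted_block_row n m (\<lambda>i. t ^ (i * m))"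
  let ?Y = "weighted_block_col n m (\<lambda>j b. t ^ j / d b)"
  have X: "?X \<in> carrier_mat n (m * n)" and Y: "?Y \<in> carrier_mat (m * n) n"
    unfolding weighted_block_row_def weighted_block_col_def by simp_all
  have C: "(?X * B * ?Y) $$ (a, b)
      = (\<Sum>i<m. \<Sum>j<m. t ^ (i * m) * B $$ (i * n + a, j * n + b) * t ^ j) / d b"
    if "a < n" "b < n" for a b
    using index_weighted_compression[OF B that]
    by (simp add: sum_divide_distrib times_divide_eq_right)
  have "fits_graph n E (?X * B * ?Y)"
    unfolding fits_graph_def
  proof (intro conjI allI impI)
    show "?X * B * ?Y \<in> carrier_mat n n" using X B Y by simp
  next
    fix a assume "a < n"
    then show "(?X * B * ?Y) $$ (a, a) = 1" using C t unfolding d_def by simp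
  next
    fix a b assume "a < n" "b < n" "a \<noteq> b \<and> \<not> E a b"
    then show "(?X * B * ?Y) $$ (a, b) = 0" using C zero by simp
  qed
  moreover have "crank (?X * B * ?Y) \<le> crank B" by (rule crank_mult3_le[OF X B Y])
  ultimately show ?thesis by (rule that)
qed

theorem mainTheorem1:
  fixes n :: nat and E :: "nat \<Rightarrow> nat \<Rightarrow> bool"
  assumes "simple_graph n E"
  shows "haemers_nc n (graph_space n E) = haemers_graph n E"
proof -
  obtain B where B: "fits_graph n E B" "crank B = haemers_graph n E"
    using haemers_graph_attained by blast
  obtain B' where B': "fits_space n (graph_space n E) n B'" "crank B' \<le> crank B"
    using fits_space_of_fits_graph[OF B(1)] .
  obtain m C where C: "fits_space n (graph_space n E) m C" "crank C = haemers_nc n (graph_space n E)"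
    using haemers_nc_attained[OF B'(1)] by blast
  obtain D where D: "fits_graph n E D" "crank D \<le> crank C"
    using fits_graph_of_fits_space[OF C(1)] .
  have "haemers_nc n (graph_space n E) \<le> haemers_graph n E"
    using haemers_nc_le[OF B'(1)] B'(2) B(2) by simp
  moreover have "haemers_graph n E \<le> haemers_nc n (graph_space n E)"
    using haemers_graph_le[OF D(1)] D(2) C(2) by simp
  ultimately show ?thesis by (rule antisym)
qed

end
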